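(* Let $(\Sigma,\mathscr{P})$ be a Kelvin-Planck theory with a Clausius-Duhem pair $(\eta^\circ,T^\circ)$, and let $(\mathscr{v},\mathscr{w})\in\mathscr{V}(\Sigma)$ satisfy $\int_\Sigma\eta^\circ\,d\mathscr{v}-\int_\Sigma\frac{d\mathscr{w}}{T^\circ}=0$. If $(\mathscr{v},\mathscr{w})\notin\hat{\mathscr{P}}$, then there is another Clausius-Duhem pair $(\eta,T)$ such that $\int_\Sigma\eta\,d\mathscr{v}-\int_\Sigma\frac{d\mathscr{w}}{T}<0$.
   Context: $\Sigma$ is a compact Hausdorff space. $\mathscr{M}(\Sigma)$ is the vector space of regular signed Borel measures on $\Sigma$ with its weak-star topology; $\mathscr{M}_+(\Sigma)$ the nonnegative members; $\mathscr{M}^\circ(\Sigma)=\{\mu:\mu(\Sigma)=0\}$; $\mathscr{V}(\Sigma)=\mathscr{M}^\circ(\Sigma)\oplus\mathscr{M}(\Sigma)$ with the product topology. For $\mathscr{P}\subset\mathscr{V}(\Sigma)$, $\hat{\mathscr{P}}$ is the closure of the set of nonnegative multiples of members of $\mathscr{P}$. A thermodynamical theory is $(\Sigma,\mathscr{P})$ with $\hat{\mathscr{P}}$ convex; it is Kelvin-Planck if $\hat{\mathscr{P}}\cap\{(0,\nu):\nu\in\mathscr{M}_+(\Sigma)\}=\{(0,0)\}$. A Clausius-Duhem pair is $(\eta,T)$, $\eta\in C(\Sigma,\mathbb{R})$, $T\in C(\Sigma,(0,\infty))$, with $\int_\Sigma\eta\,d(\Delta\mathscr{m})\ge\int_\Sigma\frac{d\mathscr{q}}{T}$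 for all $(\Delta\mathscr{m},\mathscr{q})\in\mathscr{P}$. *)

theory Defs
  imports "HOL-Analysis.Analysis"
begin

text \<open>The compact Hausdorff space Sigma is the universe of a type 'a :: t2_space
  (compactness is assumed in the theorem).  A signed measure is represented by its
  real-valued set function on the Borel sets (value 0 off the Borel sets).\<close>

type_synonym 'a smeasure = "'a set \<Rightarrow> real"

definition signed_measure :: "('a::topological_space) smeasure \<Rightarrow> bool" where
  "signed_measure \<mu> \<longleftrightarrow>
     (\<forall>A. A \<notin> sets borel \<longrightarrow> \<mu> A = 0) \<and> \<mu> {} = 0 \<and>
     (\<forall>F::nat \<Rightarrow> 'a set. range F \<subseteq> sets borel \<and> disjoint_family F \<longrightarrow>
        (\<lambda>n. \<mu> (F n)) sums \<mu> (\<Union>n. F n))"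

definition tvar :: "('a::topological_space) smeasure \<Rightarrow> 'a set \<Rightarrow> real" where
  "tvar \<mu> A = (SUP P \<in> {P. finite P \<and> P \<subseteq> sets borel \<and> disjoint P \<and> \<Union>P = A}.
                  \<Sum>B\<in>P. \<bar>\<mu> B\<bar>)"

definition regular_setfun :: "('a::topological_space) smeasure \<Rightarrow> bool" where
  "regular_setfun \<nu> \<longleftrightarrow>
     (\<forall>A \<in> sets borel.
        \<nu> A = (SUP K \<in> {K. compact K \<and> K \<subseteq> A}. \<nu> K) \<and>
        \<nu> A = (INF U \<in> {U. open U \<and> A \<subseteq> U}. \<nu> U))"

definition Msp :: "('a::topological_space) smeasure set" where
  "Msp = {\<mu>. signed_measure \<mu> \<and> regular_setfun (tvar \<mu>)}"

definition Mplus :: "('a::topological_space) smeasure set" where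
  "Mplus = {\<mu> \<in> Msp. \<forall>A. \<mu> A \<ge> 0}"

definition Mzero :: "('a::topological_space) smeasure set" where
  "Mzero = {\<mu> \<in> Msp. \<mu> UNIV = 0}"

definition Vsp :: "(('a::topological_space) smeasure \<times> 'a smeasure) set" where
  "Vsp = Mzero \<times> Msp"

definition pos_part :: "('a::topological_space) smeasure \<Rightarrow> 'a measure" where
  "pos_part \<mu> = measure_of UNIV (sets borel) (\<lambda>A. ennreal ((tvar \<mu> A + \<mu> A) / 2))"

definition neg_part :: "('a::topological_space) smeasure \<Rightarrow> 'a measure" where
  "neg_part \<mu> = measure_of UNIV (sets borel) (\<lambda>A. ennreal ((tvar \<mu> A - \<mu> A) / 2))"

definition sint :: "('a::topological_space) smeasure \<Rightarrow> ('a \<Rightarrow> real) \<Rightarrow> real" where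
  "sint \<mu> f = integral\<^sup>L (pos_part \<mu>) f - integral\<^sup>L (neg_part \<mu>) f"

text \<open>Closure in V(Sigma) with respect to the product of the weak-star topologies
  (basic neighbourhoods given by finitely many continuous test functions).\<close>
definition wstar_closure ::
    "(('a::topological_space) smeasure \<times> 'a smeasure) set \<Rightarrow> ('a smeasure \<times> 'a smeasure) set" where
  "wstar_closure S = {x \<in> Vsp. \<forall>F. finite F \<and> (\<forall>f\<in>F. continuous_on UNIV f) \<longrightarrow>
      (\<forall>\<epsilon>>0. \<exists>y\<in>S. \<forall>f\<in>F. \<bar>sint (fst y) f - sint (fst x) f\<bar> < \<epsilon> \<and>
                                 \<bar>sint (snd y) f - sint (snd x) f\<bar> < \<epsilon>)}"

definition hatP ::
    "(('a::topological_space) smeasure \<times> 'a smeasure) set \<Rightarrow> ('a smeasure \<times> 'a smeasure) set" where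
  "hatP P = wstar_closure {((\<lambda>A. c * v A), (\<lambda>A. c * w A)) | c v w. c \<ge> 0 \<and> (v, w) \<in> P}"

definition convex_pairs :: "('a smeasure \<times> 'a smeasure) set \<Rightarrow> bool" where
  "convex_pairs S \<longleftrightarrow> (\<forall>x\<in>S. \<forall>y\<in>S. \<forall>t::real. 0 \<le> t \<and> t \<le> 1 \<longrightarrow>
      ((\<lambda>A. t * fst x A + (1 - t) * fst y A), (\<lambda>A. t * snd x A + (1 - t) * snd y A)) \<in> S)"

definition thermo_theory :: "(('a::topological_space) smeasure \<times> 'a smeasure) set \<Rightarrow> bool" where
  "thermo_theory P \<longleftrightarrow> P \<subseteq> Vsp \<and> convex_pairs (hatP P)"

definition kelvin_planck :: "(('a::topological_space) smeasure \<times> 'a smeasure) set \<Rightarrow> bool" where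
  "kelvin_planck P \<longleftrightarrow> thermo_theory P \<and>
     hatP P \<inter> {((\<lambda>A. 0), \<nu>) | \<nu>. \<nu> \<in> Mplus} = {((\<lambda>A. 0), (\<lambda>A. 0))}"

definition CD_pair ::
    "(('a::topological_space) smeasure \<times> 'a smeasure) set \<Rightarrow> ('a \<Rightarrow> real) \<Rightarrow> ('a \<Rightarrow> real) \<Rightarrow> bool" where
  "CD_pair P \<eta> T \<longleftrightarrow> continuous_on UNIV \<eta> \<and> continuous_on UNIV T \<and> (\<forall>x. T x > 0) \<and>
     (\<forall>(dm, q) \<in> P. sint dm \<eta> \<ge> sint q (\<lambda>x. 1 / T x))"

end

theory Submission
  imports Defs
begin

text \<open>
  If \<open>(v, w)\<close> lies outside the weak-star closed convex cone \<open>hatP P\<close>, finitely many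
  continuous test functions and an \<open>\<epsilon> > 0\<close> separate it from all nonnegative multiples of
  processes.  Integrating against these test functions maps \<open>hatP P\<close> onto a convex cone in
  a finite-dimensional space that keeps a positive distance from the image of \<open>(v, w)\<close>;
  the direction to the nearest point of its closure gives continuous \<open>\<alpha>, \<beta>\<close> with
  \<open>\<integral>\<alpha> d\<Delta>m + \<integral>\<beta> dq \<ge> 0\<close> on all processes but \<open>\<integral>\<alpha> dv + \<integral>\<beta> dw < 0\<close>.
  Perturbing the given pair to \<open>\<eta> = \<eta>\<^sup>\<circ> + \<kappa> \<alpha>\<close> and \<open>1 / T = 1 / T\<^sup>\<circ> - \<kappa> \<beta>\<close>, with
  \<open>\<kappa> > 0\<close> small enough that \<open>T\<close> stays positive on the compact space, keeps the
  Clausius-Duhem inequality and turns the vanishing defect of \<open>(v, w)\<close> into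
  \<open>\<kappa> (\<integral>\<alpha> dv + \<integral>\<beta> dw) < 0\<close>.  The finite-dimensional reduction needs the integral to be
  linear in the measure, which comes from the Hahn-Jordan decomposition.
\<close>

section \<open>Signed measures\<close>

lemma signed_measure_empty: "signed_measure \<mu> \<Longrightarrow> \<mu> {} = 0"
  by (simp add: signed_measure_def)

lemma signed_measure_sums:
  assumes "signed_measure \<mu>" "\<And>i. F i \<in> sets borel" "disjoint_family F"
  shows "(\<lambda>n. \<mu> (F n)) sums \<mu> (\<Union>n. F n)"
  using assms unfolding signed_measure_def by blast

lemma signed_measure_Un:
  assumes \<mu>: "signed_measure \<mu>" and "A \<in> sets borel" "B \<in> sets borel" "A \<inter> B = {}"
  shows "\<mu> (A \<union> B) = \<mu> A + \<mu> B"
proof -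
  define F where "F n = (if n = 0 then A else if n = 1 then B else {})" for n :: nat
  have "(\<lambda>n. \<mu> (F n)) sums \<mu> (\<Union>n. F n)"
    using assms by (intro signed_measure_sums) (auto simp: F_def disjoint_family_on_def)
  moreover have "(\<Union>n. F n) = A \<union> B"
    by (auto simp: F_def split: if_splits)
  moreover have "(\<lambda>n. \<mu> (F n)) sums (\<Sum>n\<in>{0, 1}. \<mu> (F n))"
    by (rule sums_finite) (auto simp: F_def signed_measure_empty[OF \<mu>])
  ultimately have "\<mu> (A \<union> B) = (\<Sum>n\<in>{0, 1}. \<mu> (F n))"
    using sums_unique2 by metis
  then show ?thesis
    by (simp add: F_def)
qed

lemma signed_measure_Int_Diff:
  assumes "signed_measure \<mu>" "A \<in> sets borel" "B \<in> sets borel"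
  shows "\<mu> A = \<mu> (A \<inter> B) + \<mu> (A - B)"
proof -
  have "A = (A \<inter> B) \<union> (A - B)" by blast
  then show ?thesis
    using signed_measure_Un[OF assms(1), of "A \<inter> B" "A - B"] assms(2,3) by auto
qed

lemma signed_measure_Compl:
  assumes "signed_measure \<mu>" "A \<in> sets borel"
  shows "\<mu> (- A) = \<mu> UNIV - \<mu> A"
  using signed_measure_Int_Diff[OF assms(1) _ assms(2), of UNIV] by (simp add: Compl_eq_Diff_UNIV)

lemma signed_measure_Un_Int:
  assumes \<mu>: "signed_measure \<mu>" and A: "A \<in> sets borel" and B: "B \<in> sets borel"
  shows "\<mu> (A \<union> B) + \<mu> (A \<inter> B) = \<mu> A + \<mu> B"
proof -
  have "\<mu> (A \<union> B) = \<mu> B + \<mu> (A - B)"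
    using signed_measure_Un[OF \<mu>, of B "A - B"] A B by (simp add: sup_commute)
  then show ?thesis
    using signed_measure_Int_Diff[OF \<mu> A B] by simp
qed

lemma signed_measure_sum_Int:
  assumes \<mu>: "signed_measure \<mu>" and C: "C \<in> sets borel"
  shows "finite P \<Longrightarrow> P \<subseteq> sets borel \<Longrightarrow> disjoint P \<Longrightarrow> (\<Sum>B\<in>P. \<mu> (B \<inter> C)) = \<mu> (\<Union>P \<inter> C)"
proof (induction P rule: finite_induct)
  case empty
  then show ?case by (simp add: signed_measure_empty[OF \<mu>])
next
  case (insert B P)
  have "B \<inter> \<Union>P = {}"
    using insert.prems(2) insert.hyps(2) by (auto simp: pairwise_insert disjnt_def)
  moreover have "\<Union>(insert B P) \<inter> C = (B \<inter> C) \<union> (\<Union>P \<inter> C)" by auto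
  moreover have "\<Union>P \<in> sets borel"
    using insert.hyps(1) insert.prems(1) by (intro sets.finite_Union) auto
  ultimately have "\<mu> (\<Union>(insert B P) \<inter> C) = \<mu> (B \<inter> C) + \<mu> (\<Union>P \<inter> C)"
    using signed_measure_Un[OF \<mu>, of "B \<inter> C" "\<Union>P \<inter> C"] insert.prems C by auto
  then show ?case
    using insert.IH insert.hyps insert.prems by (simp add: pairwise_insert)
qed

lemma signed_measure_sum_disjoint_family:
  fixes D :: "nat \<Rightarrow> 'a::topological_space set"
  assumes \<mu>: "signed_measure \<mu>" and D: "\<And>i. D i \<in> sets borel" and "disjoint_family D"
  shows "(\<Sum>i<n. \<mu> (D i)) = \<mu> (\<Union>i<n. D i)"
proof (induction n)
  case 0
  then show ?case by (simp add: signed_measure_empty[OF \<mu>])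
next
  case (Suc n)
  have "(\<Union>i<n. D i) \<inter> D n = {}"
    using \<open>disjoint_family D\<close> by (auto simp: disjoint_family_on_def) (metis IntI empty_iff less_irrefl)
  then have "\<mu> ((\<Union>i<n. D i) \<union> D n) = \<mu> (\<Union>i<n. D i) + \<mu> (D n)"
    using D by (intro signed_measure_Un[OF \<mu>]) auto
  then show ?case
    using Suc.IH by (simp add: lessThan_Suc Un_commute)
qed

lemma Lim_signed_measure_incseq:
  assumes \<mu>: "signed_measure \<mu>" and A: "\<And>i. A i \<in> sets borel" and inc: "incseq A"
  shows "(\<lambda>n. \<mu> (A n)) \<longlonglongrightarrow> \<mu> (\<Union>n. A n)"
proof -
  have D: "disjointed A i \<in> sets borel" for i
    using sets.range_disjointed_sets[of A borel] A by auto
  have "(\<lambda>n. \<mu> (disjointed A n)) sums \<mu> (\<Union>n. disjointed A n)"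
    using signed_measure_sums[OF \<mu> D disjoint_family_disjointed] .
  then have "(\<lambda>n. \<Sum>i<n. \<mu> (disjointed A i)) \<longlonglongrightarrow> \<mu> (\<Union>n. A n)"
    by (simp add: sums_def UN_disjointed_eq)
  moreover have "(\<Sum>i<Suc n. \<mu> (disjointed A i)) = \<mu> (A n)" for n
  proof -
    have "(\<Union>i<Suc n. disjointed A i) = (\<Union>i<Suc n. A i)"
      using finite_UN_disjointed_eq[of A "Suc n"] by (simp add: atLeast0LessThan)
    also have "\<dots> = A n"
      using inc by (auto simp: incseq_def lessThan_Suc_atMost)
    finally show ?thesis
      using signed_measure_sum_disjoint_family[OF \<mu> D disjoint_family_disjointed] by simp
  qed
  ultimately show ?thesis
    using LIMSEQ_Suc[of "\<lambda>n. \<Sum>i<n. \<mu> (disjointed A i)"] by simp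
qed

lemma Lim_signed_measure_decseq:
  assumes \<mu>: "signed_measure \<mu>" and A: "\<And>i. A i \<in> sets borel" and dec: "decseq A"
  shows "(\<lambda>n. \<mu> (A n)) \<longlonglongrightarrow> \<mu> (\<Inter>n. A n)"
proof -
  have "incseq (\<lambda>n. - A n)"
    using dec by (intro incseq_SucI) (simp add: decseq_Suc_iff)
  then have "(\<lambda>n. \<mu> (- A n)) \<longlonglongrightarrow> \<mu> (\<Union>n. - A n)"
    using A by (intro Lim_signed_measure_incseq[OF \<mu>]) (simp add: sets.compl_sets)
  moreover have "(\<Union>n. - A n) = - (\<Inter>n. A n)" by blast
  moreover have "(\<Inter>n. A n) \<in> sets borel" using A by blast
  ultimately have "(\<lambda>n. \<mu> UNIV - \<mu> (A n)) \<longlonglongrightarrow> \<mu> UNIV - \<mu> (\<Inter>n. A n)"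
    by (simp only: signed_measure_Compl[OF \<mu>] A)
  from tendsto_diff[OF tendsto_const[of "\<mu> UNIV"] this] show ?thesis
    by simp
qed

lemma signed_measure_uminus: "signed_measure \<mu> \<Longrightarrow> signed_measure (\<lambda>A. - \<mu> A)"
  by (auto simp: signed_measure_def intro: sums_minus)

lemma signed_measure_lincomb:
  "signed_measure \<mu> \<Longrightarrow> signed_measure \<nu> \<Longrightarrow> signed_measure (\<lambda>A. a * \<mu> A + b * \<nu> A)"
  unfolding signed_measure_def by (auto intro!: sums_add sums_mult)

section \<open>Hahn and Jordan decompositions\<close>

lemma signed_measure_unbounded_split:
  assumes \<mu>: "signed_measure \<mu>" and E: "E \<in> sets borel"
    and unbdd: "\<not> (\<exists>C. \<forall>G\<in>sets borel. G \<subseteq> E \<longrightarrow> \<bar>\<mu> G\<bar> \<le> C)"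
  shows "\<exists>F\<in>sets borel. F \<subseteq> E \<and> 1 \<le> \<bar>\<mu> F\<bar> \<and> \<not> (\<exists>C. \<forall>G\<in>sets borel. G \<subseteq> E - F \<longrightarrow> \<bar>\<mu> G\<bar> \<le> C)"
proof -
  have "\<exists>F\<in>sets borel. F \<subseteq> E \<and> \<not> \<bar>\<mu> F\<bar> \<le> \<bar>\<mu> E\<bar> + 1"
    using unbdd by blast
  then obtain F where F: "F \<in> sets borel" "F \<subseteq> E" "\<bar>\<mu> E\<bar> + 1 < \<bar>\<mu> F\<bar>"
    by (auto simp: not_le)
  have "\<mu> E = \<mu> F + \<mu> (E - F)"
    using signed_measure_Int_Diff[OF \<mu> E F(1)] F(2) by (simp add: Int_absorb1)
  then have big: "1 \<le> \<bar>\<mu> (E - F)\<bar>" "1 \<le> \<bar>\<mu> F\<bar>"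
    using F(3) by linarith+
  have "\<not> (\<exists>C. \<forall>G\<in>sets borel. G \<subseteq> E - F \<longrightarrow> \<bar>\<mu> G\<bar> \<le> C) \<or>
        \<not> (\<exists>C. \<forall>G\<in>sets borel. G \<subseteq> F \<longrightarrow> \<bar>\<mu> G\<bar> \<le> C)"
  proof (rule ccontr)
    assume "\<not> ?thesis"
    then obtain C1 C2 where C1: "\<forall>G\<in>sets borel. G \<subseteq> E - F \<longrightarrow> \<bar>\<mu> G\<bar> \<le> C1"
      and C2: "\<forall>G\<in>sets borel. G \<subseteq> F \<longrightarrow> \<bar>\<mu> G\<bar> \<le> C2" by blast
    have "\<bar>\<mu> G\<bar> \<le> C2 + C1" if "G \<in> sets borel" "G \<subseteq> E" for G
    proof -
      have "\<mu> G = \<mu> (G \<inter> F) + \<mu> (G - F)"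
        by (rule signed_measure_Int_Diff[OF \<mu> that(1) F(1)])
      moreover have "G \<inter> F \<in> sets borel" "G - F \<in> sets borel"
        using that(1) F(1) by auto
      then have "\<bar>\<mu> (G \<inter> F)\<bar> \<le> C2" "\<bar>\<mu> (G - F)\<bar> \<le> C1"
        using C1 C2 that(2) by auto
      ultimately show ?thesis by linarith
    qed
    then show False
      using unbdd by blast
  qed
  then show ?thesis
  proof
    assume "\<not> (\<exists>C. \<forall>G\<in>sets borel. G \<subseteq> E - F \<longrightarrow> \<bar>\<mu> G\<bar> \<le> C)"
    then show ?thesis
      using F big by blast
  next
    assume "\<not> (\<exists>C. \<forall>G\<in>sets borel. G \<subseteq> F \<longrightarrow> \<bar>\<mu> G\<bar> \<le> C)"
    moreover have "E - (E - F) = F"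
      using F(2) by blast
    ultimately show ?thesis
      using E F(1) big by (intro bexI[of _ "E - F"]) auto
  qed
qed

text \<open>Otherwise one could split off, forever, disjoint sets of measure at least \<open>1\<close> in absolute
  value, contradicting the convergence of the series of their measures.\<close>

lemma signed_measure_bounded:
  assumes \<mu>: "signed_measure \<mu>"
  shows "\<exists>C. \<forall>A\<in>sets borel. \<bar>\<mu> A\<bar> \<le> C"
proof (rule ccontr)
  define unbdd where "unbdd E \<longleftrightarrow> \<not> (\<exists>C. \<forall>G\<in>sets borel. G \<subseteq> E \<longrightarrow> \<bar>\<mu> G\<bar> \<le> C)" for E
  assume "\<not> ?thesis"
  then have "unbdd UNIV"
    by (simp add: unbdd_def)
  define cut where "cut E = (SOME F. F \<in> sets borel \<and> F \<subseteq> E \<and> 1 \<le> \<bar>\<mu> F\<bar> \<and> unbdd (E - F))" for E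
  have cut: "cut E \<in> sets borel \<and> cut E \<subseteq> E \<and> 1 \<le> \<bar>\<mu> (cut E)\<bar> \<and> unbdd (E - cut E)"
    if "E \<in> sets borel" "unbdd E" for E
    unfolding cut_def
    by (rule someI_ex) (use signed_measure_unbounded_split[OF \<mu> that(1)] that(2) in \<open>unfold unbdd_def, blast\<close>)
  define E where "E n = ((\<lambda>X. X - cut X) ^^ n) UNIV" for n
  have E_Suc: "E (Suc n) = E n - cut (E n)" for n
    by (simp add: E_def)
  have E: "E n \<in> sets borel \<and> unbdd (E n)" for n
    by (induction n) (use \<open>unbdd UNIV\<close> cut in \<open>auto simp: E_def sets.Diff\<close>)
  define D where "D n = cut (E n)" for n
  have D: "D n \<in> sets borel" "D n \<subseteq> E n" "1 \<le> \<bar>\<mu> (D n)\<bar>" for n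
    using cut[of "E n"] E[of n] by (auto simp: D_def)
  have E_antimono: "E n \<subseteq> E m" if "m \<le> n" for m n
    using that by (induction rule: dec_induct) (auto simp: E_Suc)
  have "D m \<inter> D n = {}" if "m < n" for m n
  proof -
    have "D n \<subseteq> E (Suc m)"
      using D(2)[of n] E_antimono[of "Suc m" n] that by auto
    then show ?thesis
      by (auto simp: E_Suc D_def)
  qed
  then have "disjoint_family D"
    by (metis Int_commute disjoint_family_on_def nat_neq_iff)
  then have "(\<lambda>n. \<mu> (D n)) sums \<mu> (\<Union>n. D n)"
    by (rule signed_measure_sums[OF \<mu> D(1)])
  then have "(\<lambda>n. \<mu> (D n)) \<longlonglongrightarrow> 0"
    using summable_LIMSEQ_zero sums_summable by blast
  then obtain n where "\<bar>\<mu> (D n)\<bar> < 1"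
    using LIMSEQ_D[of _ 0 1] by fastforce
  then show False
    using D(3)[of n] by simp
qed

text \<open>The next three lemmas adapt the proof of \<open>finite_unsigned_Hahn_decomposition\<close> from a
  difference of finite measures to a signed measure.\<close>

lemma signed_measure_INT_lower_bound:
  assumes \<mu>: "signed_measure \<mu>" and E: "\<And>n. E n \<in> sets borel"
    and le_\<gamma>: "\<And>X. X \<in> sets borel \<Longrightarrow> \<mu> X \<le> \<gamma>" and E_gt: "\<And>n. \<gamma> - 1 / 2 ^ n < \<mu> (E n)"
    and "m \<le> n"
  shows "\<gamma> - 2 / 2 ^ m + 1 / 2 ^ n \<le> \<mu> (\<Inter>i\<in>{m..n}. E i)"
  using \<open>m \<le> n\<close>
proof (induction rule: dec_induct)
  case base
  then show ?case
    using E_gt[of m] by (simp add: field_simps)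
next
  case (step n)
  let ?X = "\<Inter>i\<in>{m..n}. E i"
  have X: "?X \<in> sets borel"
    using E step.hyps by (intro sets.finite_INT) auto
  have eq: "(\<Inter>i\<in>{m..Suc n}. E i) = ?X \<inter> E (Suc n)"
    using step.hyps by (auto simp: le_Suc_eq)
  have "\<mu> (?X \<union> E (Suc n)) \<le> \<gamma>"
    using X E by (intro le_\<gamma>) auto
  moreover have "\<gamma> - 2 / 2 ^ m + 1 / 2 ^ Suc n = (\<gamma> - 2 / 2 ^ m + 1 / 2 ^ n) + (\<gamma> - 1 / 2 ^ Suc n) - \<gamma>"
    by (simp add: field_simps)
  ultimately show ?case
    unfolding eq using signed_measure_Un_Int[OF \<mu> X E[of "Suc n"]] step.IH E_gt[of "Suc n"] by linarith
qed

lemma signed_measure_INT_atLeast_lower_bound: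
  assumes \<mu>: "signed_measure \<mu>" and E: "\<And>n. E n \<in> sets borel"
    and le_\<gamma>: "\<And>X. X \<in> sets borel \<Longrightarrow> \<mu> X \<le> \<gamma>" and E_gt: "\<And>n. \<gamma> - 1 / 2 ^ n < \<mu> (E n)"
  shows "\<gamma> - 2 / 2 ^ m \<le> \<mu> (\<Inter>i\<in>{m..}. E i)"
proof (rule LIMSEQ_le_const)
  define G where "G n = (\<Inter>i\<in>{m..n + m}. E i)" for n
  have "G n \<in> sets borel" for n
    using E by (auto simp: G_def)
  moreover have "decseq G"
    by (auto simp: decseq_def G_def)
  moreover have "(\<Inter>n. G n) = (\<Inter>i\<in>{m..}. E i)"
    by (fastforce simp: G_def le_iff_add)
  ultimately show "(\<lambda>n. \<mu> (G n)) \<longlonglongrightarrow> \<mu> (\<Inter>i\<in>{m..}. E i)"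
    using Lim_signed_measure_decseq[OF \<mu>, of G] by simp
  have "\<gamma> - 2 / 2 ^ m \<le> \<mu> (G n)" for n
  proof -
    have "0 < 1 / (2::real) ^ (n + m)" by simp
    then show ?thesis
      using signed_measure_INT_lower_bound[OF \<mu> E le_\<gamma> E_gt, of m "n + m"] unfolding G_def by linarith
  qed
  then show "\<exists>N. \<forall>n\<ge>N. \<gamma> - 2 / 2 ^ m \<le> \<mu> (G n)"
    by blast
qed

lemma signed_measure_attains_max:
  assumes \<mu>: "signed_measure \<mu>"
  shows "\<exists>Y\<in>sets borel. \<forall>X\<in>sets borel. \<mu> X \<le> \<mu> Y"
proof -
  obtain C where "\<forall>A\<in>sets borel. \<bar>\<mu> A\<bar> \<le> C"
    using signed_measure_bounded[OF \<mu>] by blast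
  then have bdd: "bdd_above (\<mu> ` sets borel)"
    by (intro bdd_aboveI[of _ C]) (auto simp: abs_le_iff)
  define \<gamma> where "\<gamma> = (SUP X\<in>sets borel. \<mu> X)"
  have le_\<gamma>: "\<mu> X \<le> \<gamma>" if "X \<in> sets borel" for X
    unfolding \<gamma>_def using bdd that by (rule cSUP_upper2) simp
  have "\<exists>X\<in>sets borel. \<gamma> - 1 / 2 ^ n < \<mu> X" for n
    unfolding \<gamma>_def using bdd by (intro less_cSUP_iff[THEN iffD1]) auto
  then obtain E where E: "\<And>n. E n \<in> sets borel" and E_gt: "\<And>n. \<gamma> - 1 / 2 ^ n < \<mu> (E n)"
    by metis
  define F where "F m = (\<Inter>i\<in>{m..}. E i)" for m
  have F: "F m \<in> sets borel" for m
    using E by (auto simp: F_def)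
  have "(\<lambda>m. \<mu> (F m)) \<longlonglongrightarrow> \<mu> (\<Union>m. F m)"
    using F by (intro Lim_signed_measure_incseq[OF \<mu>]) (auto simp: incseq_def F_def)
  moreover have "(\<lambda>m. \<gamma> - 2 / 2 ^ m) \<longlonglongrightarrow> \<gamma> - 0"
    by (intro tendsto_intros LIMSEQ_divide_realpow_zero) auto
  ultimately have "\<gamma> - 0 \<le> \<mu> (\<Union>m. F m)"
    using signed_measure_INT_atLeast_lower_bound[OF \<mu> E le_\<gamma> E_gt]
    by (intro LIMSEQ_le) (auto simp: F_def)
  moreover have "(\<Union>m. F m) \<in> sets borel"
    using F by auto
  ultimately show ?thesis
    using le_\<gamma> by force
qed

definition positive_set :: "'a::topological_space smeasure \<Rightarrow> 'a set \<Rightarrow> bool" where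
  "positive_set \<mu> H \<longleftrightarrow> H \<in> sets borel \<and> (\<forall>X\<in>sets borel. X \<subseteq> H \<longrightarrow> 0 \<le> \<mu> X)"

lemma signed_measure_Hahn_decomposition:
  assumes \<mu>: "signed_measure \<mu>"
  shows "\<exists>H. positive_set \<mu> H \<and> positive_set (\<lambda>A. - \<mu> A) (- H)"
proof -
  obtain H where H: "H \<in> sets borel" and max: "\<And>X. X \<in> sets borel \<Longrightarrow> \<mu> X \<le> \<mu> H"
    using signed_measure_attains_max[OF \<mu>] by blast
  have "0 \<le> \<mu> X" if "X \<in> sets borel" "X \<subseteq> H" for X
    using signed_measure_Int_Diff[OF \<mu> H that(1)] max[of "H - X"] H that
    by (simp add: Int_absorb1 sets.Diff)
  moreover have "\<mu> X \<le> 0" if "X \<in> sets borel" "X \<subseteq> - H" for X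
  proof -
    have "H \<inter> X = {}"
      using that(2) by blast
    then show ?thesis
      using signed_measure_Un[OF \<mu> H that(1)] max[of "H \<union> X"] H that(1) by simp
  qed
  ultimately show ?thesis
    using H by (auto simp: positive_set_def sets.compl_sets)
qed

lemma sum_abs_le_Hahn:
  assumes \<mu>: "signed_measure \<mu>" and pos: "positive_set \<mu> H" and neg: "positive_set (\<lambda>A. - \<mu> A) (- H)"
    and P: "finite P" "P \<subseteq> sets borel" "disjoint P"
  shows "(\<Sum>B\<in>P. \<bar>\<mu> B\<bar>) \<le> \<mu> (\<Union>P \<inter> H) - \<mu> (\<Union>P \<inter> - H)"
proof -
  have H: "H \<in> sets borel" "- H \<in> sets borel"
    using pos neg by (simp_all add: positive_set_def)
  have "\<bar>\<mu> B\<bar> \<le> \<mu> (B \<inter> H) - \<mu> (B \<inter> - H)" if "B \<in> P" for B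
  proof -
    have B: "B \<in> sets borel"
      using that P by auto
    have "B - H = B \<inter> - H" by auto
    then have "\<mu> B = \<mu> (B \<inter> H) + \<mu> (B \<inter> - H)"
      using signed_measure_Int_Diff[OF \<mu> B H(1)] by simp
    moreover have "0 \<le> \<mu> (B \<inter> H)" "0 \<le> - \<mu> (B \<inter> - H)"
      using pos neg B H by (auto simp: positive_set_def)
    ultimately show ?thesis by linarith
  qed
  then have "(\<Sum>B\<in>P. \<bar>\<mu> B\<bar>) \<le> (\<Sum>B\<in>P. \<mu> (B \<inter> H)) - (\<Sum>B\<in>P. \<mu> (B \<inter> - H))"
    by (simp add: sum_mono flip: sum_subtractf)
  also have "\<dots> = \<mu> (\<Union>P \<inter> H) - \<mu> (\<Union>P \<inter> - H)"
    using signed_measure_sum_Int[OF \<mu> H(1) P] signed_measure_sum_Int[OF \<mu> H(2) P] by simp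
  finally show ?thesis .
qed

lemma tvar_Hahn:
  assumes \<mu>: "signed_measure \<mu>" and pos: "positive_set \<mu> H" and neg: "positive_set (\<lambda>A. - \<mu> A) (- H)"
    and A: "A \<in> sets borel"
  shows "tvar \<mu> A = \<mu> (A \<inter> H) - \<mu> (A \<inter> - H)"
proof -
  have H: "H \<in> sets borel" "- H \<in> sets borel"
    using pos neg by (simp_all add: positive_set_def)
  define Ps where "Ps = {P. finite P \<and> P \<subseteq> sets borel \<and> disjoint P \<and> \<Union>P = A}"
  have "(\<Sum>B\<in>P. \<bar>\<mu> B\<bar>) \<le> \<mu> (A \<inter> H) - \<mu> (A \<inter> - H)" if "P \<in> Ps" for P
    using sum_abs_le_Hahn[OF \<mu> pos neg] that by (auto simp: Ps_def)
  moreover have "{A \<inter> H, A \<inter> - H} \<in> Ps"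
    using A H by (auto simp: Ps_def disjoint_def)
  moreover have "(\<Sum>B\<in>{A \<inter> H, A \<inter> - H}. \<bar>\<mu> B\<bar>) = \<mu> (A \<inter> H) - \<mu> (A \<inter> - H)"
  proof (cases "A \<inter> H = A \<inter> - H")
    case True
    then have "A \<inter> H = {}" "A \<inter> - H = {}" by auto
    then show ?thesis
      unfolding \<open>A \<inter> H = {}\<close> \<open>A \<inter> - H = {}\<close> by (simp add: signed_measure_empty[OF \<mu>])
  next
    case False
    have "0 \<le> \<mu> (A \<inter> H)" "0 \<le> - \<mu> (A \<inter> - H)"
      using pos neg A H by (auto simp: positive_set_def)
    then show ?thesis using False by simp
  qed
  ultimately have "Sup ((\<lambda>P. \<Sum>B\<in>P. \<bar>\<mu> B\<bar>) ` Ps) = \<mu> (A \<inter> H) - \<mu> (A \<inter> - H)"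
    by (intro cSup_eq_maximum) force+
  then show ?thesis
    by (simp add: tvar_def Ps_def)
qed

lemma sigma_algebra_borel: "sigma_algebra UNIV (sets borel)"
  using sets.sigma_algebra_axioms[of borel] by simp

lemma emeasure_measure_of_positive_set:
  assumes \<mu>: "signed_measure \<mu>" and pos: "positive_set \<mu> H"
    and g: "\<And>A. A \<in> sets borel \<Longrightarrow> g A = \<mu> (A \<inter> H)" and A: "A \<in> sets borel"
  shows "emeasure (measure_of UNIV (sets borel) (\<lambda>A. ennreal (g A))) A = ennreal (\<mu> (A \<inter> H))"
proof -
  have H: "H \<in> sets borel"
    using pos by (simp add: positive_set_def)
  have "emeasure (measure_of UNIV (sets borel) (\<lambda>A. ennreal (g A))) A = ennreal (g A)"
  proof (rule emeasure_measure_of_sigma[OF sigma_algebra_borel _ _ A])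
    show "positive (sets borel) (\<lambda>A. ennreal (g A))"
      using g[of "{}"] by (simp add: positive_def signed_measure_empty[OF \<mu>])
    show "countably_additive (sets borel) (\<lambda>A. ennreal (g A))"
      unfolding countably_additive_def
    proof (intro allI impI)
      fix F :: "nat \<Rightarrow> 'a set"
      assume F: "range F \<subseteq> sets borel" "disjoint_family F" "(\<Union>i. F i) \<in> sets borel"
      have "disjoint_family (\<lambda>i. F i \<inter> H)"
        using F(2) by (auto simp: disjoint_family_on_def)
      then have "(\<lambda>i. \<mu> (F i \<inter> H)) sums \<mu> (\<Union>i. F i \<inter> H)"
        using F(1) H by (intro signed_measure_sums[OF \<mu>]) auto
      moreover have "(\<Union>i. F i \<inter> H) = (\<Union>i. F i) \<inter> H" by auto
      ultimately have "(\<Sum>i. ennreal (\<mu> (F i \<inter> H))) = ennreal (\<mu> ((\<Union>i. F i) \<inter> H))"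
        using pos F(1) H by (intro suminf_ennreal_eq) (auto simp: positive_set_def)
      then show "(\<Sum>i. ennreal (g (F i))) = ennreal (g (\<Union>i. F i))"
        using g F by auto
    qed
  qed
  then show ?thesis
    using g[OF A] by simp
qed

lemma Jordan_decomposition:
  assumes \<mu>: "signed_measure \<mu>"
  shows "finite_measure (pos_part \<mu>)" "finite_measure (neg_part \<mu>)"
    and "sets (pos_part \<mu>) = sets borel" "sets (neg_part \<mu>) = sets borel"
    and "A \<in> sets borel \<Longrightarrow> measure (pos_part \<mu>) A - measure (neg_part \<mu>) A = \<mu> A"
proof -
  obtain H where pos: "positive_set \<mu> H" and neg: "positive_set (\<lambda>A. - \<mu> A) (- H)"
    using signed_measure_Hahn_decomposition[OF \<mu>] by blast
  have H: "H \<in> sets borel"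
    using pos by (simp add: positive_set_def)
  have split: "\<mu> A = \<mu> (A \<inter> H) + \<mu> (A \<inter> - H)" if "A \<in> sets borel" for A
    using signed_measure_Int_Diff[OF \<mu> that H] by (simp add: Diff_eq)
  have ep: "emeasure (pos_part \<mu>) A = ennreal (\<mu> (A \<inter> H))" if "A \<in> sets borel" for A
    unfolding pos_part_def using tvar_Hahn[OF \<mu> pos neg] split that
    by (intro emeasure_measure_of_positive_set[OF \<mu> pos]) auto
  have en: "emeasure (neg_part \<mu>) A = ennreal (- \<mu> (A \<inter> - H))" if "A \<in> sets borel" for A
    unfolding neg_part_def using tvar_Hahn[OF \<mu> pos neg] split that
    by (intro emeasure_measure_of_positive_set[OF signed_measure_uminus[OF \<mu>] neg]) auto
  have sets_eq: "sets (measure_of UNIV (sets borel) m) = sets borel" for m :: "'a set \<Rightarrow> ennreal"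
    using sigma_algebra.sigma_sets_eq[OF sigma_algebra_borel] by simp
  show sp: "sets (pos_part \<mu>) = sets borel" and sn: "sets (neg_part \<mu>) = sets borel"
    by (simp_all add: pos_part_def neg_part_def sets_eq)
  have "space (pos_part \<mu>) = UNIV" "space (neg_part \<mu>) = UNIV"
    using sets_eq_imp_space_eq[OF sp] sets_eq_imp_space_eq[OF sn] by simp_all
  then show "finite_measure (pos_part \<mu>)" "finite_measure (neg_part \<mu>)"
    by (simp_all add: finite_measureI ep en)
  show "measure (pos_part \<mu>) A - measure (neg_part \<mu>) A = \<mu> A" if "A \<in> sets borel"
    using ep[OF that] en[OF that] pos neg H that split[OF that]
    by (auto simp: measure_def positive_set_def sets.compl_sets)
qed

section \<open>Linearity of the integral\<close>

lemma integrable_bounded_borel: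
  fixes f :: "'a::topological_space \<Rightarrow> real"
  assumes "finite_measure M" "sets M = sets borel" "f \<in> borel_measurable borel" "\<And>x. \<bar>f x\<bar> \<le> B"
  shows "integrable M f"
proof -
  interpret finite_measure M by fact
  show ?thesis
    using assms(3,4) measurable_cong_sets[OF assms(2) refl]
    by (intro integrable_const_bound[where B=B]) auto
qed

lemma integral_tendsto_bounded_borel:
  fixes U :: "nat \<Rightarrow> 'a::topological_space \<Rightarrow> real"
  assumes M: "finite_measure M" "sets M = sets borel"
    and f: "f \<in> borel_measurable borel" and U: "\<And>n. U n \<in> borel_measurable borel"
    and bound: "\<And>n x. \<bar>U n x\<bar> \<le> B" and lim: "\<And>x. (\<lambda>n. U n x) \<longlonglongrightarrow> f x"
  shows "(\<lambda>n. integral\<^sup>L M (U n)) \<longlonglongrightarrow> integral\<^sup>L M f"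
proof (rule integral_dominated_convergence[where w="\<lambda>_. B"])
  show "f \<in> borel_measurable M" "\<And>n. U n \<in> borel_measurable M"
    using f U measurable_cong_sets[OF M(2) refl] by auto
  show "integrable M (\<lambda>_. B)"
    by (rule integrable_bounded_borel[OF M, of _ B]) (use bound[of 0 undefined] in auto)
qed (use bound lim in auto)

lemma integral_lincomb_eq_zero_nonneg:
  fixes M :: "'i \<Rightarrow> 'a::topological_space measure" and f :: "'a \<Rightarrow> real"
  assumes M: "\<And>i. i \<in> I \<Longrightarrow> finite_measure (M i)" "\<And>i. i \<in> I \<Longrightarrow> sets (M i) = sets borel"
    and c: "\<And>A. A \<in> sets borel \<Longrightarrow> (\<Sum>i\<in>I. c i * measure (M i) A) = 0"
    and f: "f \<in> borel_measurable borel" "\<And>x. 0 \<le> f x" "\<And>x. f x \<le> B"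
  shows "(\<Sum>i\<in>I. c i * integral\<^sup>L (M i) f) = 0"
proof -
  have int: "integrable (M i) u" if "i \<in> I" "u \<in> borel_measurable borel" "\<And>x. 0 \<le> u x" "\<And>x. u x \<le> C" for i u and C :: real
    using that by (intro integrable_bounded_borel[OF M[OF that(1)], of _ C]) (auto simp: abs_le_iff)
  have "\<forall>B. (\<forall>x. f x \<le> B) \<longrightarrow> (\<Sum>i\<in>I. c i * integral\<^sup>L (M i) f) = 0"
    using f(1,2)
  proof (induction rule: borel_measurable_induct_real)
    case (set A)
    have "space (M i) = UNIV" if "i \<in> I" for i
      using sets_eq_imp_space_eq[OF M(2)[OF that]] by simp
    then show ?case
      using c[OF set] by (simp cong: sum.cong)
  next
    case (mult u a)
    show ?case
    proof (intro allI impI)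
      fix B assume B: "\<forall>x. a * u x \<le> B"
      show "(\<Sum>i\<in>I. c i * integral\<^sup>L (M i) (\<lambda>x. a * u x)) = 0"
      proof (cases "a = 0")
        case False
        then have "\<forall>x. u x \<le> B / a"
          using mult.hyps(1) B by (simp add: field_simps)
        then have "(\<Sum>i\<in>I. c i * integral\<^sup>L (M i) u) = 0"
          using mult.IH by blast
        then show ?thesis
          by (simp add: mult.left_commute flip: sum_distrib_left)
      qed simp
    qed
  next
    case (add u v)
    have "(\<Sum>i\<in>I. c i * integral\<^sup>L (M i) (\<lambda>x. v x + u x)) = 0" if B: "\<forall>x. v x + u x \<le> B" for B
    proof -
      have uB: "u x \<le> B" and vB: "v x \<le> B" for x
        using add.hyps(2,4)[of x] B[rule_format, of x] by linarith+
      have "integral\<^sup>L (M i) (\<lambda>x. v x + u x) = integral\<^sup>L (M i) v + integral\<^sup>L (M i) u" if "i \<in> I" for i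
        using int[OF that add.hyps(1,2) uB] int[OF that add.hyps(3,4) vB] by simp
      moreover have "(\<Sum>i\<in>I. c i * integral\<^sup>L (M i) u) = 0" "(\<Sum>i\<in>I. c i * integral\<^sup>L (M i) v) = 0"
        using add.IH uB vB by blast+
      ultimately show ?thesis
        by (simp add: distrib_left sum.distrib cong: sum.cong)
    qed
    then show ?case by blast
  next
    case (seq U)
    show ?case
    proof (intro allI impI)
      fix B assume B: "\<forall>x. f x \<le> B"
      have "incseq (\<lambda>n. U n x)" for x
        using seq.hyps(3) by (simp add: incseq_def le_fun_def)
      then have UB: "U n x \<le> B" for n x
        using incseq_le[of "\<lambda>n. U n x" "f x" n] seq.hyps(4)[of x] B[rule_format, of x] by simp
      then have zero: "(\<Sum>i\<in>I. c i * integral\<^sup>L (M i) (U n)) = 0" for n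
        using seq.IH by blast
      have "\<bar>U n x\<bar> \<le> B" for n x
        using UB[of n x] seq.hyps(2)[of n x] by simp
      then have "(\<lambda>n. \<Sum>i\<in>I. c i * integral\<^sup>L (M i) (U n)) \<longlonglongrightarrow> (\<Sum>i\<in>I. c i * integral\<^sup>L (M i) f)"
        using seq.hyps(1,4) f(1) by (intro tendsto_sum tendsto_mult_left integral_tendsto_bounded_borel[OF M]) auto
      then show "(\<Sum>i\<in>I. c i * integral\<^sup>L (M i) f) = 0"
        using zero by (simp add: LIMSEQ_const_iff)
    qed
  qed
  then show ?thesis
    using f(3) by blast
qed

lemma integral_lincomb_eq_zero:
  fixes M :: "'i \<Rightarrow> 'a::topological_space measure" and f :: "'a \<Rightarrow> real"
  assumes M: "\<And>i. i \<in> I \<Longrightarrow> finite_measure (M i)" "\<And>i. i \<in> I \<Longrightarrow> sets (M i) = sets borel"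
    and c: "\<And>A. A \<in> sets borel \<Longrightarrow> (\<Sum>i\<in>I. c i * measure (M i) A) = 0"
    and f: "f \<in> borel_measurable borel" "\<And>x. \<bar>f x\<bar> \<le> B"
  shows "(\<Sum>i\<in>I. c i * integral\<^sup>L (M i) f) = 0"
proof -
  have "0 \<le> f x + B" "f x + B \<le> 2 * B" for x
    using f(2)[of x] by (auto simp: abs_le_iff)
  then have "(\<Sum>i\<in>I. c i * integral\<^sup>L (M i) (\<lambda>x. f x + B)) = 0"
    using f(1) by (intro integral_lincomb_eq_zero_nonneg[OF M c, of _ "2 * B"]) auto
  moreover have "integral\<^sup>L (M i) (\<lambda>x. f x + B) = integral\<^sup>L (M i) f + B * measure (M i) UNIV" if "i \<in> I" for i
  proof -
    interpret finite_measure "M i" by (rule M(1)[OF that])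
    have "space (M i) = UNIV"
      using sets_eq_imp_space_eq[OF M(2)[OF that]] by simp
    have "integral\<^sup>L (M i) (\<lambda>x. f x + B) = integral\<^sup>L (M i) f + integral\<^sup>L (M i) (\<lambda>x. B)"
      by (rule Bochner_Integration.integral_add[OF integrable_bounded_borel[OF M[OF that] f] integrable_const])
    then show ?thesis
      using \<open>space (M i) = UNIV\<close> by (simp add: mult.commute)
  qed
  moreover have "(\<Sum>i\<in>I. c i * (B * measure (M i) UNIV)) = 0"
    using c[of UNIV] by (simp add: mult.left_commute flip: sum_distrib_left)
  ultimately show ?thesis
    by (simp add: distrib_left sum.distrib cong: sum.cong)
qed

lemma sint_lincomb:
  assumes \<mu>: "signed_measure \<mu>" and \<nu>: "signed_measure \<nu>"
    and f: "f \<in> borel_measurable borel" "bounded (range f)"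
  shows "sint (\<lambda>A. a * \<mu> A + b * \<nu> A) f = a * sint \<mu> f + b * sint \<nu> f"
proof -
  define \<rho> where "\<rho> A = a * \<mu> A + b * \<nu> A" for A
  have \<rho>: "signed_measure \<rho>"
    unfolding \<rho>_def using \<mu> \<nu> by (rule signed_measure_lincomb)
  \<comment> \<open>On Borel sets \<open>\<rho>\<^sup>+ - \<rho>\<^sup>- = a (\<mu>\<^sup>+ - \<mu>\<^sup>-) + b (\<nu>\<^sup>+ - \<nu>\<^sup>-)\<close>.\<close>
  define M where "M = [pos_part \<rho>, neg_part \<rho>, pos_part \<mu>, neg_part \<mu>, pos_part \<nu>, neg_part \<nu>]"
  define c :: "real list" where "c = [1, -1, -a, a, -b, b]"
  have I: "{..<6::nat} = {0, 1, 2, 3, 4, 5}" by auto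
  obtain B where B: "\<And>x. \<bar>f x\<bar> \<le> B"
    using f(2) by (auto simp: bounded_real)
  note J = Jordan_decomposition[OF \<rho>] Jordan_decomposition[OF \<mu>] Jordan_decomposition[OF \<nu>]
  have "(\<Sum>i<6. c ! i * integral\<^sup>L (M ! i) f) = 0"
  proof (rule integral_lincomb_eq_zero[OF _ _ _ f(1) B])
    show "finite_measure (M ! i)" "sets (M ! i) = sets borel" if "i \<in> {..<6}" for i
      using that J unfolding I M_def by auto
    show "(\<Sum>i<6. c ! i * measure (M ! i) A) = 0" if "A \<in> sets borel" for A
      using J(5,10,15)[OF that] unfolding I M_def c_def \<rho>_def by (simp add: algebra_simps)
  qed
  then show ?thesis
    unfolding I M_def c_def sint_def \<rho>_def[symmetric] by (simp add: algebra_simps)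
qed

lemma integrable_Jordan_parts:
  fixes f :: "'a::topological_space \<Rightarrow> real"
  assumes "signed_measure \<mu>" "f \<in> borel_measurable borel" "bounded (range f)"
  shows "integrable (pos_part \<mu>) f" "integrable (neg_part \<mu>) f"
proof -
  obtain B where B: "\<And>x. \<bar>f x\<bar> \<le> B"
    using assms(3) by (auto simp: bounded_real)
  note J = Jordan_decomposition[OF assms(1)]
  show "integrable (pos_part \<mu>) f" "integrable (neg_part \<mu>) f"
    by (rule integrable_bounded_borel[OF J(1) J(3) assms(2) B],
        rule integrable_bounded_borel[OF J(2) J(4) assms(2) B])
qed

lemma sint_lincomb_fun:
  assumes "signed_measure \<mu>"
    and "f \<in> borel_measurable borel" "bounded (range f)" "g \<in> borel_measurable borel" "bounded (range g)"
  shows "sint \<mu> (\<lambda>x. a * f x + b * g x) = a * sint \<mu> f + b * sint \<mu> g"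
  using integrable_Jordan_parts[OF assms(1-3)] integrable_Jordan_parts[OF assms(1,4,5)]
  by (simp add: sint_def algebra_simps)

lemma sint_sum_fun:
  assumes "signed_measure \<mu>"
    and "\<And>j. j \<in> J \<Longrightarrow> g j \<in> borel_measurable borel" "\<And>j. j \<in> J \<Longrightarrow> bounded (range (g j))"
  shows "sint \<mu> (\<lambda>x. \<Sum>j\<in>J. a j * g j x) = (\<Sum>j\<in>J. a j * sint \<mu> (g j))"
proof -
  have "integral\<^sup>L N (\<lambda>x. \<Sum>j\<in>J. a j * g j x) = (\<Sum>j\<in>J. a j * integral\<^sup>L N (g j))"
    if "\<And>j. j \<in> J \<Longrightarrow> integrable N (g j)" for N
  proof -
    have "integral\<^sup>L N (\<lambda>x. \<Sum>j\<in>J. a j * g j x) = (\<Sum>j\<in>J. integral\<^sup>L N (\<lambda>x. a j * g j x))"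
      using that by (intro Bochner_Integration.integral_sum integrable_mult_right)
    then show ?thesis
      by simp
  qed
  moreover have "integrable (pos_part \<mu>) (g j)" "integrable (neg_part \<mu>) (g j)" if "j \<in> J" for j
    using integrable_Jordan_parts[OF assms(1) assms(2,3)[OF that]] by auto
  ultimately show ?thesis
    unfolding sint_def by (simp add: right_diff_distrib sum_subtractf)
qed

section \<open>Separation from a convex cone in finite dimensions\<close>

lemma linear_le_quadratic_imp_nonpos:
  fixes a c :: real
  assumes le: "\<And>t. 0 < t \<Longrightarrow> t \<le> 1 \<Longrightarrow> 2 * t * a \<le> t\<^sup>2 * c"
  shows "a \<le> 0"
proof (rule ccontr)
  assume "\<not> a \<le> 0"
  define t where "t = min 1 (a / (\<bar>c\<bar> + 1))"
  have t: "0 < t" "t \<le> 1"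
    using \<open>\<not> a \<le> 0\<close> by (auto simp: t_def)
  have "t * c \<le> t * \<bar>c\<bar>"
    using t by (intro mult_left_mono) auto
  also have "\<dots> \<le> a / (\<bar>c\<bar> + 1) * \<bar>c\<bar>"
    by (intro mult_right_mono) (auto simp: t_def)
  also have "\<dots> < a"
    using \<open>\<not> a \<le> 0\<close> by (simp add: field_simps)
  finally have "t * (t * c) < t * (2 * a)"
    using t \<open>\<not> a \<le> 0\<close> by (intro mult_strict_left_mono) auto
  then show False
    using le[OF t] by (simp add: power2_eq_square algebra_simps)
qed

lemma sum_sq_le_perturbed_imp_inner_nonpos:
  fixes w x :: "'i \<Rightarrow> real"
  assumes "\<And>t. 0 < t \<Longrightarrow> t \<le> 1 \<Longrightarrow> (\<Sum>i\<in>I. (w i)\<^sup>2) \<le> (\<Sum>i\<in>I. (w i - t * x i)\<^sup>2)"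
  shows "(\<Sum>i\<in>I. w i * x i) \<le> 0"
proof (rule linear_le_quadratic_imp_nonpos)
  fix t :: real
  assume "0 < t" "t \<le> 1"
  have "(\<Sum>i\<in>I. (w i - t * x i)\<^sup>2) = (\<Sum>i\<in>I. (w i)\<^sup>2) - 2 * t * (\<Sum>i\<in>I. w i * x i) + t\<^sup>2 * (\<Sum>i\<in>I. (x i)\<^sup>2)"
    by (simp add: power2_diff power_mult_distrib sum.distrib sum_subtractf sum_distrib_left mult_ac)
  then show "2 * t * (\<Sum>i\<in>I. w i * x i) \<le> t\<^sup>2 * (\<Sum>i\<in>I. (x i)\<^sup>2)"
    using assms[OF \<open>0 < t\<close> \<open>t \<le> 1\<close>] by linarith
qed

lemma bounded_coordinates_convergent_subseq:
  fixes k :: "nat \<Rightarrow> 'i \<Rightarrow> real"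
  assumes "finite I" and bdd: "\<And>i. i \<in> I \<Longrightarrow> bounded (range (\<lambda>n. k n i))"
  obtains z r where "strict_mono r" "\<And>i. i \<in> I \<Longrightarrow> (\<lambda>n. k (r n) i) \<longlonglongrightarrow> z i"
proof -
  have "\<forall>J\<subseteq>I. \<exists>z::'i \<Rightarrow> real. \<exists>r. strict_mono r \<and>
      (\<forall>\<epsilon>>0. eventually (\<lambda>n. \<forall>i\<in>J. dist (k (r n) i) (z i) < \<epsilon>) sequentially)"
    by (rule compact_lemma_general[where proj="\<lambda>x i. x i" and unproj=id])
       (use assms in \<open>auto simp: image_image\<close>)
  then obtain z r where "strict_mono r"
    and conv: "\<And>\<epsilon>. \<epsilon> > 0 \<Longrightarrow> eventually (\<lambda>n. \<forall>i\<in>I. dist (k (r n) i) (z i) < \<epsilon>) sequentially"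
    by blast
  moreover have "(\<lambda>n. k (r n) i) \<longlonglongrightarrow> z i" if "i \<in> I" for i
    unfolding tendsto_iff
  proof (intro allI impI)
    fix \<epsilon> :: real
    assume "0 < \<epsilon>"
    show "eventually (\<lambda>n. dist (k (r n) i) (z i) < \<epsilon>) sequentially"
      using conv[OF \<open>0 < \<epsilon>\<close>] by (rule eventually_mono) (use that in blast)
  qed
  ultimately show ?thesis
    using that by blast
qed

lemma sum_sq_le_imp_bounded_coordinates:
  fixes k :: "nat \<Rightarrow> 'i \<Rightarrow> real"
  assumes "finite I" "\<And>n. (\<Sum>i\<in>I. (p i - k n i)\<^sup>2) \<le> M" "i \<in> I"
  shows "bounded (range (\<lambda>n. k n i))"
  unfolding bounded_real
proof (intro exI ballI)
  fix y assume "y \<in> range (\<lambda>n. k n i)"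
  then obtain n where n: "y = k n i" by blast
  have "(p i - k n i)\<^sup>2 \<le> (\<Sum>i\<in>I. (p i - k n i)\<^sup>2)"
    by (rule member_le_sum) (use assms(1,3) in auto)
  also have "\<dots> \<le> M"
    by (rule assms(2))
  finally have "\<bar>p i - k n i\<bar> \<le> sqrt M"
    using real_sqrt_le_mono by fastforce
  then show "\<bar>y\<bar> \<le> \<bar>p i\<bar> + sqrt M"
    using abs_triangle_ineq4[of "p i" "p i - k n i"] n by simp
qed

lemma cone_nearest_point:
  fixes K :: "('i \<Rightarrow> real) set" and p :: "'i \<Rightarrow> real"
  assumes "finite I" "K \<noteq> {}"
    and cone: "\<And>x y a b. x \<in> K \<Longrightarrow> y \<in> K \<Longrightarrow> 0 \<le> a \<Longrightarrow> 0 \<le> b \<Longrightarrow> (\<lambda>i. a * x i + b * y i) \<in> K"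
  obtains z where
    "\<And>k a b. k \<in> K \<Longrightarrow> 0 \<le> a \<Longrightarrow> 0 \<le> b \<Longrightarrow>
       (\<Sum>i\<in>I. (p i - z i)\<^sup>2) \<le> (\<Sum>i\<in>I. (p i - (a * z i + b * k i))\<^sup>2)"
    "\<And>d. (\<And>k. k \<in> K \<Longrightarrow> d \<le> (\<Sum>i\<in>I. (p i - k i)\<^sup>2)) \<Longrightarrow> d \<le> (\<Sum>i\<in>I. (p i - z i)\<^sup>2)"
proof -
  define D where "D k = (\<Sum>i\<in>I. (p i - k i)\<^sup>2)" for k
  define \<delta> where "\<delta> = Inf (D ` K)"
  have bdd: "bdd_below (D ` K)"
    by (rule bdd_belowI[of _ 0]) (auto simp: D_def sum_nonneg)
  have \<delta>_le: "\<delta> \<le> D k" if "k \<in> K" for k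
    unfolding \<delta>_def by (rule cInf_lower) (use bdd that in auto)
  have "\<exists>k\<in>K. D k < \<delta> + 1 / Suc j" for j
    using cInf_less_iff[of "D ` K" "\<delta> + 1 / Suc j"] \<open>K \<noteq> {}\<close> bdd by (simp flip: \<delta>_def)
  then obtain kk where kk: "\<And>j. kk j \<in> K" and kk_less: "\<And>j. D (kk j) < \<delta> + 1 / Suc j"
    by metis
  have D_kk: "(\<lambda>j. D (kk j)) \<longlonglongrightarrow> \<delta>"
  proof (rule tendsto_sandwich[of "\<lambda>_. \<delta>" _ _ "\<lambda>j. \<delta> + 1 / Suc j"])
    show "\<forall>\<^sub>F j in sequentially. \<delta> \<le> D (kk j)" "\<forall>\<^sub>F j in sequentially. D (kk j) \<le> \<delta> + 1 / Suc j"
      using \<delta>_le[OF kk] kk_less[THEN less_imp_le] by simp_all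
    show "(\<lambda>j. \<delta> + 1 / Suc j) \<longlonglongrightarrow> \<delta>"
      using tendsto_add[OF tendsto_const LIMSEQ_Suc[OF lim_inverse_n']] by (simp add: inverse_eq_divide)
  qed simp
  have "D (kk j) \<le> \<delta> + 1" for j
  proof -
    have "1 / real (Suc j) \<le> 1" by simp
    then show ?thesis
      using kk_less[of j] by linarith
  qed
  then have "bounded (range (\<lambda>n. kk n i))" if "i \<in> I" for i
    by (intro sum_sq_le_imp_bounded_coordinates[OF \<open>finite I\<close> _ that]) (simp add: D_def)
  then obtain z r where r: "strict_mono r" and z: "\<And>i. i \<in> I \<Longrightarrow> (\<lambda>n. kk (r n) i) \<longlonglongrightarrow> z i"
    using bounded_coordinates_convergent_subseq[OF \<open>finite I\<close>] by blast
  have lim: "(\<lambda>n. D (\<lambda>i. a * kk (r n) i + b * k i)) \<longlonglongrightarrow> D (\<lambda>i. a * z i + b * k i)" for a b k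
    unfolding D_def by (intro tendsto_sum tendsto_intros z)
  have \<delta>_le_z: "\<delta> \<le> D (\<lambda>i. a * z i + b * k i)" if "k \<in> K" "0 \<le> a" "0 \<le> b" for k a b
    using lim by (rule LIMSEQ_le_const) (use \<delta>_le cone kk that in blast)
  have "(\<lambda>n. D (kk (r n))) \<longlonglongrightarrow> D z"
    using lim[of 1 0 z] by simp
  moreover have "(\<lambda>n. D (kk (r n))) \<longlonglongrightarrow> \<delta>"
    using LIMSEQ_subseq_LIMSEQ[OF D_kk r] by (simp add: comp_def)
  ultimately have Dz: "D z = \<delta>"
    by (rule LIMSEQ_unique)
  show ?thesis
  proof (rule that)
    show "(\<Sum>i\<in>I. (p i - z i)\<^sup>2) \<le> (\<Sum>i\<in>I. (p i - (a * z i + b * k i))\<^sup>2)"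
      if "k \<in> K" "0 \<le> a" "0 \<le> b" for k a b
      using \<delta>_le_z[OF that] Dz by (simp add: D_def)
    show "d \<le> (\<Sum>i\<in>I. (p i - z i)\<^sup>2)" if "\<And>k. k \<in> K \<Longrightarrow> d \<le> (\<Sum>i\<in>I. (p i - k i)\<^sup>2)" for d
      using \<open>K \<noteq> {}\<close> that unfolding Dz[unfolded D_def] \<delta>_def D_def by (intro cInf_greatest) auto
  qed
qed

lemma cone_separation_finite:
  fixes K :: "('i \<Rightarrow> real) set" and p :: "'i \<Rightarrow> real"
  assumes "finite I" "K \<noteq> {}"
    and cone: "\<And>x y a b. x \<in> K \<Longrightarrow> y \<in> K \<Longrightarrow> 0 \<le> a \<Longrightarrow> 0 \<le> b \<Longrightarrow> (\<lambda>i. a * x i + b * y i) \<in> K"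
    and far: "\<And>k. k \<in> K \<Longrightarrow> d \<le> (\<Sum>i\<in>I. (p i - k i)\<^sup>2)" and "0 < d"
  shows "\<exists>u. (\<forall>k\<in>K. 0 \<le> (\<Sum>i\<in>I. u i * k i)) \<and> (\<Sum>i\<in>I. u i * p i) < 0"
proof -
  obtain z where z: "\<And>k a b. k \<in> K \<Longrightarrow> 0 \<le> a \<Longrightarrow> 0 \<le> b \<Longrightarrow>
       (\<Sum>i\<in>I. (p i - z i)\<^sup>2) \<le> (\<Sum>i\<in>I. (p i - (a * z i + b * k i))\<^sup>2)"
    and inf: "\<And>d. (\<And>k. k \<in> K \<Longrightarrow> d \<le> (\<Sum>i\<in>I. (p i - k i)\<^sup>2)) \<Longrightarrow> d \<le> (\<Sum>i\<in>I. (p i - z i)\<^sup>2)"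
    using cone_nearest_point[OF assms(1-3), of p] by blast
  have d_le: "d \<le> (\<Sum>i\<in>I. (p i - z i)\<^sup>2)"
    by (rule inf[OF far])
  define w where "w i = p i - z i" for i
  obtain k0 where k0: "k0 \<in> K"
    using \<open>K \<noteq> {}\<close> by blast
  have wk: "(\<Sum>i\<in>I. w i * k i) \<le> 0" if "k \<in> K" for k
  proof (rule sum_sq_le_perturbed_imp_inner_nonpos)
    fix t :: real assume "0 < t" "t \<le> 1"
    then show "(\<Sum>i\<in>I. (w i)\<^sup>2) \<le> (\<Sum>i\<in>I. (w i - t * k i)\<^sup>2)"
      using z[OF that, of 1 t] by (simp add: w_def diff_diff_eq)
  qed
  have "(\<Sum>i\<in>I. w i * z i) \<le> 0"
  proof (rule sum_sq_le_perturbed_imp_inner_nonpos)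
    fix t :: real assume "0 < t" "t \<le> 1"
    then show "(\<Sum>i\<in>I. (w i)\<^sup>2) \<le> (\<Sum>i\<in>I. (w i - t * z i)\<^sup>2)"
      using z[OF k0, of "1 + t" 0] by (simp add: w_def distrib_right diff_diff_eq)
  qed
  moreover have "(\<Sum>i\<in>I. w i * - z i) \<le> 0"
  proof (rule sum_sq_le_perturbed_imp_inner_nonpos)
    fix t :: real assume "0 < t" "t \<le> 1"
    then show "(\<Sum>i\<in>I. (w i)\<^sup>2) \<le> (\<Sum>i\<in>I. (w i - t * - z i)\<^sup>2)"
      using z[OF k0, of "1 - t" 0] by (simp add: w_def algebra_simps)
  qed
  ultimately have "(\<Sum>i\<in>I. w i * z i) = 0"
    by (simp add: sum_negf)
  moreover have "(\<Sum>i\<in>I. w i * p i) = (\<Sum>i\<in>I. (p i - z i)\<^sup>2) + (\<Sum>i\<in>I. w i * z i)"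
    by (simp add: w_def power2_eq_square algebra_simps flip: sum.distrib)
  ultimately have "(\<Sum>i\<in>I. - w i * p i) < 0"
    using d_le \<open>0 < d\<close> by (simp add: sum_negf)
  moreover have "\<forall>k\<in>K. 0 \<le> (\<Sum>i\<in>I. - w i * k i)"
    using wk by (simp add: sum_negf)
  ultimately show ?thesis
    by (intro exI[of _ "\<lambda>i. - w i"]) simp
qed

section \<open>Separation from the closed cone generated by the processes\<close>

lemma continuous_on_compact_UNIV_bounded_borel:
  fixes f :: "'a::topological_space \<Rightarrow> real"
  assumes "compact (UNIV :: 'a set)" "continuous_on UNIV f"
  shows "f \<in> borel_measurable borel" "bounded (range f)"
  using borel_measurable_continuous_onI[OF assms(2)] compact_imp_bounded[OF compact_continuous_image[OF assms(2,1)]]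
  by auto

lemma Vsp_signed_measure: "x \<in> Vsp \<Longrightarrow> signed_measure (fst x) \<and> signed_measure (snd x)"
  by (auto simp: Vsp_def Mzero_def Msp_def)

lemma sint_scale:
  assumes "signed_measure \<mu>" "f \<in> borel_measurable borel" "bounded (range f)"
  shows "sint (\<lambda>A. c * \<mu> A) f = c * sint \<mu> f"
  using sint_lincomb[OF assms(1,1,2,3), of c 0] by simp

lemma wstar_closureD:
  assumes "x \<in> wstar_closure S" "finite F" "\<And>f. f \<in> F \<Longrightarrow> continuous_on UNIV f" "0 < \<epsilon>"
  shows "\<exists>y\<in>S. \<forall>f\<in>F. \<bar>sint (fst y) f - sint (fst x) f\<bar> < \<epsilon> \<and> \<bar>sint (snd y) f - sint (snd x) f\<bar> < \<epsilon>"
  using assms unfolding wstar_closure_def by simp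

lemma not_in_wstar_closure:
  assumes "x \<in> Vsp" "x \<notin> wstar_closure S"
  obtains F \<epsilon> where "finite F" "\<And>f. f \<in> F \<Longrightarrow> continuous_on UNIV f" "0 < \<epsilon>"
    "\<And>y. y \<in> S \<Longrightarrow> \<exists>f\<in>F. \<epsilon> \<le> \<bar>sint (fst y) f - sint (fst x) f\<bar> \<or> \<epsilon> \<le> \<bar>sint (snd y) f - sint (snd x) f\<bar>"
proof -
  obtain F \<epsilon> where "finite F" "\<forall>f\<in>F. continuous_on UNIV f" "0 < \<epsilon>"
    and "\<forall>y\<in>S. \<not> (\<forall>f\<in>F. \<bar>sint (fst y) f - sint (fst x) f\<bar> < \<epsilon> \<and> \<bar>sint (snd y) f - sint (snd x) f\<bar> < \<epsilon>)"
    using assms unfolding wstar_closure_def by blast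
  then show ?thesis
    using that[of F \<epsilon>] by (simp add: not_less)
qed

lemma wstar_closure_scaled_far:
  fixes S :: "('a::topological_space smeasure \<times> 'a smeasure) set" and v w :: "'a smeasure"
  assumes compact: "compact (UNIV :: 'a set)"
    and S: "\<And>y. y \<in> S \<Longrightarrow> signed_measure (fst y) \<and> signed_measure (snd y)"
    and S_scale: "\<And>y c. y \<in> S \<Longrightarrow> 0 \<le> c \<Longrightarrow> ((\<lambda>A. c * fst y A), (\<lambda>A. c * snd y A)) \<in> S"
    and F: "finite F" "\<And>f. f \<in> F \<Longrightarrow> continuous_on UNIV f" and "0 < \<epsilon>"
    and sep: "\<And>y. y \<in> S \<Longrightarrow> \<exists>f\<in>F. \<epsilon> \<le> \<bar>sint (fst y) f - sint v f\<bar> \<or> \<epsilon> \<le> \<bar>sint (snd y) f - sint w f\<bar>"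
    and x: "x \<in> wstar_closure S" and "0 \<le> c"
  shows "\<exists>f\<in>F. \<epsilon> / 2 \<le> \<bar>c * sint (fst x) f - sint v f\<bar> \<or> \<epsilon> / 2 \<le> \<bar>c * sint (snd x) f - sint w f\<bar>"
proof -
  define \<epsilon>' where "\<epsilon>' = \<epsilon> / (2 * (c + 1))"
  have "0 < \<epsilon>'"
    using \<open>0 < \<epsilon>\<close> \<open>0 \<le> c\<close> by (simp add: \<epsilon>'_def)
  then obtain y where y: "y \<in> S"
    and close: "\<And>f. f \<in> F \<Longrightarrow> \<bar>sint (fst y) f - sint (fst x) f\<bar> < \<epsilon>' \<and> \<bar>sint (snd y) f - sint (snd x) f\<bar> < \<epsilon>'"
    using wstar_closureD[OF x F] by blast
  have "c * \<epsilon>' \<le> \<epsilon> / 2"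
    using \<open>0 < \<epsilon>\<close> \<open>0 \<le> c\<close> by (simp add: \<epsilon>'_def field_simps)
  then have near: "\<bar>c * a - c * b\<bar> \<le> \<epsilon> / 2" if "\<bar>a - b\<bar> < \<epsilon>'" for a b
    using that \<open>0 \<le> c\<close> mult_left_mono[of "\<bar>a - b\<bar>" \<epsilon>' c]
    by (simp add: abs_mult flip: right_diff_distrib)
  obtain f where f: "f \<in> F"
    and "\<epsilon> \<le> \<bar>sint (\<lambda>A. c * fst y A) f - sint v f\<bar> \<or> \<epsilon> \<le> \<bar>sint (\<lambda>A. c * snd y A) f - sint w f\<bar>"
    using sep[OF S_scale[OF y \<open>0 \<le> c\<close>]] by auto
  moreover have "sint (\<lambda>A. c * fst y A) f = c * sint (fst y) f" "sint (\<lambda>A. c * snd y A) f = c * sint (snd y) f"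
    using S[OF y] continuous_on_compact_UNIV_bounded_borel[OF compact F(2)[OF f]] by (simp_all add: sint_scale)
  ultimately have "\<epsilon> \<le> \<bar>c * sint (fst y) f - sint v f\<bar> \<or> \<epsilon> \<le> \<bar>c * sint (snd y) f - sint w f\<bar>"
    by simp
  moreover have "\<epsilon> / 2 \<le> \<bar>b - e\<bar>" if "\<epsilon> \<le> \<bar>a - e\<bar>" "\<bar>a - b\<bar> \<le> \<epsilon> / 2" for a b e :: real
    using abs_triangle_ineq[of "a - b" "b - e"] that by simp
  ultimately show ?thesis
    using near[OF close[OF f, THEN conjunct1]] near[OF close[OF f, THEN conjunct2]] f by blast
qed

lemma nonneg_multiples_convex_cone:
  fixes L :: "'x \<Rightarrow> 'i \<Rightarrow> real"
  assumes convex: "\<And>x y t. x \<in> C \<Longrightarrow> y \<in> C \<Longrightarrow> 0 \<le> t \<Longrightarrow> t \<le> 1 \<Longrightarrow>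
      \<exists>z\<in>C. L z = (\<lambda>i. t * L x i + (1 - t) * L y i)"
    and k1: "k1 \<in> {(\<lambda>i. c * L x i) | c x. 0 \<le> c \<and> x \<in> C}"
    and k2: "k2 \<in> {(\<lambda>i. c * L x i) | c x. 0 \<le> c \<and> x \<in> C}"
    and "0 \<le> a" "0 \<le> b"
  shows "(\<lambda>i. a * k1 i + b * k2 i) \<in> {(\<lambda>i. c * L x i) | c x. 0 \<le> c \<and> x \<in> C}"
proof -
  obtain c1 x1 where c1: "k1 = (\<lambda>i. c1 * L x1 i)" "0 \<le> c1" "x1 \<in> C"
    using k1 by blast
  obtain c2 x2 where c2: "k2 = (\<lambda>i. c2 * L x2 i)" "0 \<le> c2" "x2 \<in> C"
    using k2 by blast
  define s where "s = a * c1 + b * c2"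
  have "0 \<le> a * c1" "0 \<le> b * c2"
    using c1 c2 \<open>0 \<le> a\<close> \<open>0 \<le> b\<close> by simp_all
  show ?thesis
  proof (cases "s = 0")
    case True
    then have "a * c1 = 0" "b * c2 = 0"
      using \<open>0 \<le> a * c1\<close> \<open>0 \<le> b * c2\<close> by (simp_all add: s_def add_nonneg_eq_0_iff)
    then have "(\<lambda>i. a * k1 i + b * k2 i) = (\<lambda>i. 0 * L x1 i)"
      unfolding c1 c2 by (simp add: mult.assoc[symmetric] \<open>a * c1 = 0\<close> \<open>b * c2 = 0\<close>)
    then show ?thesis
      using c1 by blast
  next
    case False
    then have "0 < s"
      using \<open>0 \<le> a * c1\<close> \<open>0 \<le> b * c2\<close> by (simp add: s_def)
    define t where "t = a * c1 / s"
    have "0 \<le> t" "t \<le> 1"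
      using \<open>0 < s\<close> \<open>0 \<le> a * c1\<close> \<open>0 \<le> b * c2\<close> by (auto simp: t_def s_def)
    then obtain z where "z \<in> C" and z: "L z = (\<lambda>i. t * L x1 i + (1 - t) * L x2 i)"
      using convex c1(3) c2(3) by blast
    have "s * t = a * c1" "s * (1 - t) = b * c2"
      using \<open>0 < s\<close> by (simp_all add: t_def s_def right_diff_distrib)
    then have "(\<lambda>i. a * k1 i + b * k2 i) = (\<lambda>i. s * L z i)"
      by (simp add: z c1 c2 distrib_left flip: mult.assoc)
    then show ?thesis
      using \<open>z \<in> C\<close> \<open>0 < s\<close> by fastforce
  qed
qed

text \<open>The coordinates outside \<open>F\<close> are zero, so that linearity in the measure, which holds only
  for bounded measurable integrands, holds in every coordinate.\<close>

definition test_vector ::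
    "('a::topological_space \<Rightarrow> real) set \<Rightarrow> 'a smeasure \<times> 'a smeasure \<Rightarrow> ('a \<Rightarrow> real) \<times> bool \<Rightarrow> real" where
  "test_vector F x = (\<lambda>(f, b). if f \<in> F then sint (if b then fst x else snd x) f else 0)"

lemma test_vector_convex_comb:
  fixes x y :: "'a::topological_space smeasure \<times> 'a smeasure"
  assumes compact: "compact (UNIV :: 'a set)"
    and F: "\<And>f. f \<in> F \<Longrightarrow> continuous_on UNIV f"
    and x: "signed_measure (fst x)" "signed_measure (snd x)"
    and y: "signed_measure (fst y)" "signed_measure (snd y)"
  shows "test_vector F ((\<lambda>A. t * fst x A + (1 - t) * fst y A), (\<lambda>A. t * snd x A + (1 - t) * snd y A))
    = (\<lambda>i. t * test_vector F x i + (1 - t) * test_vector F y i)"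
proof
  fix i :: "('a \<Rightarrow> real) \<times> bool"
  obtain f b where i: "i = (f, b)" by fastforce
  show "test_vector F ((\<lambda>A. t * fst x A + (1 - t) * fst y A), (\<lambda>A. t * snd x A + (1 - t) * snd y A)) i
    = t * test_vector F x i + (1 - t) * test_vector F y i"
  proof (cases "f \<in> F")
    case True
    then show ?thesis
      using continuous_on_compact_UNIV_bounded_borel[OF compact F[OF True]]
      by (simp add: i test_vector_def sint_lincomb x y)
  qed (simp add: i test_vector_def)
qed

lemma sum_test_vector:
  fixes x :: "'a::topological_space smeasure \<times> 'a smeasure"
  assumes compact: "compact (UNIV :: 'a set)"
    and F: "\<And>f. f \<in> F \<Longrightarrow> continuous_on UNIV f"
    and x: "signed_measure (fst x)" "signed_measure (snd x)"
  shows "(\<Sum>i\<in>F \<times> UNIV. u i * test_vector F x i) =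
    sint (fst x) (\<lambda>z. \<Sum>f\<in>F. u (f, True) * f z) + sint (snd x) (\<lambda>z. \<Sum>f\<in>F. u (f, False) * f z)"
proof -
  have "(\<Sum>i\<in>F \<times> UNIV. u i * test_vector F x i) = (\<Sum>f\<in>F. \<Sum>b\<in>UNIV. u (f, b) * test_vector F x (f, b))"
    by (simp add: sum.cartesian_product)
  also have "\<dots> = (\<Sum>f\<in>F. u (f, True) * sint (fst x) f) + (\<Sum>f\<in>F. u (f, False) * sint (snd x) f)"
    by (simp add: UNIV_bool test_vector_def sum.distrib)
  also have "\<dots> = sint (fst x) (\<lambda>z. \<Sum>f\<in>F. u (f, True) * f z) + sint (snd x) (\<lambda>z. \<Sum>f\<in>F. u (f, False) * f z)"
    using continuous_on_compact_UNIV_bounded_borel[OF compact F]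
    by (simp add: sint_sum_fun[OF x(1)] sint_sum_fun[OF x(2)])
  finally show ?thesis .
qed

lemma sum_sq_test_vector_ge:
  assumes "finite F" "f \<in> F" "0 < \<epsilon>"
    and "\<epsilon> \<le> \<bar>c * sint (fst x) f - sint v f\<bar> \<or> \<epsilon> \<le> \<bar>c * sint (snd x) f - sint w f\<bar>"
  shows "\<epsilon>\<^sup>2 \<le> (\<Sum>i\<in>F \<times> UNIV. (test_vector F (v, w) i - c * test_vector F x i)\<^sup>2)"
proof -
  have "test_vector F (v, w) (f, True) - c * test_vector F x (f, True) = sint v f - c * sint (fst x) f"
    "test_vector F (v, w) (f, False) - c * test_vector F x (f, False) = sint w f - c * sint (snd x) f"
    using \<open>f \<in> F\<close> by (simp_all add: test_vector_def)
  then obtain b where "\<epsilon> \<le> \<bar>test_vector F (v, w) (f, b) - c * test_vector F x (f, b)\<bar>"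
    using assms(4) by (metis abs_minus_commute)
  then have "\<epsilon>\<^sup>2 \<le> (test_vector F (v, w) (f, b) - c * test_vector F x (f, b))\<^sup>2"
    using \<open>0 < \<epsilon>\<close> by (simp add: abs_le_square_iff[symmetric])
  also have "\<dots> \<le> (\<Sum>i\<in>F \<times> UNIV. (test_vector F (v, w) i - c * test_vector F x i)\<^sup>2)"
    using assms(1,2) by (intro member_le_sum) auto
  finally show ?thesis .
qed

lemma test_vector_convex_image:
  fixes C :: "('a::topological_space smeasure \<times> 'a smeasure) set"
  assumes compact: "compact (UNIV :: 'a set)" and F: "\<And>f. f \<in> F \<Longrightarrow> continuous_on UNIV f"
    and C: "convex_pairs C" "C \<subseteq> Vsp" and "x \<in> C" "y \<in> C" "0 \<le> t" "t \<le> 1"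
  shows "\<exists>z\<in>C. test_vector F z = (\<lambda>i. t * test_vector F x i + (1 - t) * test_vector F y i)"
proof -
  define z where "z = ((\<lambda>A. t * fst x A + (1 - t) * fst y A), (\<lambda>A. t * snd x A + (1 - t) * snd y A))"
  have "z \<in> C"
    using C(1) assms(5-8) unfolding convex_pairs_def z_def by blast
  moreover have "test_vector F z = (\<lambda>i. t * test_vector F x i + (1 - t) * test_vector F y i)"
    unfolding z_def using Vsp_signed_measure[of x] Vsp_signed_measure[of y] C(2) assms(5,6)
    by (intro test_vector_convex_comb[OF compact F]) auto
  ultimately show ?thesis
    by blast
qed

lemma hatP_subset_Vsp: "hatP P \<subseteq> Vsp"
  by (auto simp: hatP_def wstar_closure_def)

lemma subset_hatP:
  assumes "P \<subseteq> Vsp"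
  shows "P \<subseteq> hatP P"
proof
  fix x assume "x \<in> P"
  then have "x \<in> {((\<lambda>A. c * v A), (\<lambda>A. c * w A)) | c v w. c \<ge> 0 \<and> (v, w) \<in> P}"
    by (intro CollectI exI[of _ 1] exI[of _ "fst x"] exI[of _ "snd x"]) auto
  then show "x \<in> hatP P"
    using \<open>x \<in> P\<close> assms unfolding hatP_def wstar_closure_def by force
qed

lemma test_vector_separation:
  fixes C :: "('a::topological_space smeasure \<times> 'a smeasure) set"
  assumes compact: "compact (UNIV :: 'a set)"
    and F: "finite F" "\<And>f. f \<in> F \<Longrightarrow> continuous_on UNIV f"
    and C: "convex_pairs C" "C \<subseteq> Vsp" "C \<noteq> {}" and "(v, w) \<in> Vsp" and "0 < d"
    and far: "\<And>c x. 0 \<le> c \<Longrightarrow> x \<in> C \<Longrightarrow> d \<le> (\<Sum>i\<in>F \<times> UNIV. (test_vector F (v, w) i - c * test_vector F x i)\<^sup>2)"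
  obtains \<alpha> \<beta> where "continuous_on UNIV \<alpha>" "continuous_on UNIV \<beta>"
    "\<And>x. x \<in> C \<Longrightarrow> 0 \<le> sint (fst x) \<alpha> + sint (snd x) \<beta>" "sint v \<alpha> + sint w \<beta> < 0"
proof -
  define K where "K = {(\<lambda>i. c * test_vector F x i) | c x. 0 \<le> c \<and> x \<in> C}"
  have K_memI: "(\<lambda>i. c * test_vector F x i) \<in> K" if "0 \<le> c" "x \<in> C" for c x
    unfolding K_def using that by blast
  have "K \<noteq> {}"
    using C(3) K_memI[of 1] by force
  have cone: "(\<lambda>i. a * k1 i + b * k2 i) \<in> K" if "k1 \<in> K" "k2 \<in> K" "0 \<le> a" "0 \<le> b" for k1 k2 a b
    using nonneg_multiples_convex_cone[OF test_vector_convex_image[OF compact F(2) C(1,2)] that[unfolded K_def]]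
    by (simp add: K_def)
  have "\<exists>u. (\<forall>k\<in>K. 0 \<le> (\<Sum>i\<in>F \<times> UNIV. u i * k i)) \<and> (\<Sum>i\<in>F \<times> UNIV. u i * test_vector F (v, w) i) < 0"
    by (rule cone_separation_finite[OF _ \<open>K \<noteq> {}\<close> cone _ \<open>0 < d\<close>]) (use F(1) far in \<open>auto simp: K_def\<close>)
  then obtain u where u: "\<And>k. k \<in> K \<Longrightarrow> 0 \<le> (\<Sum>i\<in>F \<times> UNIV. u i * k i)"
    "(\<Sum>i\<in>F \<times> UNIV. u i * test_vector F (v, w) i) < 0"
    by blast
  define \<alpha> where "\<alpha> = (\<lambda>z. \<Sum>f\<in>F. u (f, True) * f z)"
  define \<beta> where "\<beta> = (\<lambda>z. \<Sum>f\<in>F. u (f, False) * f z)"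
  have pairing: "(\<Sum>i\<in>F \<times> UNIV. u i * test_vector F x i) = sint (fst x) \<alpha> + sint (snd x) \<beta>"
    if "x \<in> Vsp" for x
    using sum_test_vector[where F=F and x=x and u=u, OF compact F(2)] Vsp_signed_measure[OF that]
    by (simp add: \<alpha>_def \<beta>_def)
  show ?thesis
  proof (rule that[of \<alpha> \<beta>])
    show "continuous_on UNIV \<alpha>" "continuous_on UNIV \<beta>"
      unfolding \<alpha>_def \<beta>_def using F(2) by (auto intro!: continuous_on_sum continuous_on_mult_left)
    show "0 \<le> sint (fst x) \<alpha> + sint (snd x) \<beta>" if "x \<in> C" for x
      using u(1)[OF K_memI[of 1 x]] pairing[of x] that C(2) by auto
    show "sint v \<alpha> + sint w \<beta> < 0"
      using u(2) pairing[OF \<open>(v, w) \<in> Vsp\<close>] by simp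
  qed
qed

lemma hatP_separation:
  fixes P :: "('a::topological_space smeasure \<times> 'a smeasure) set"
  assumes compact: "compact (UNIV :: 'a set)" and P: "thermo_theory P" "hatP P \<noteq> {}"
    and vw: "(v, w) \<in> Vsp" "(v, w) \<notin> hatP P"
  obtains \<alpha> \<beta> where "continuous_on UNIV \<alpha>" "continuous_on UNIV \<beta>"
    "\<And>dm q. (dm, q) \<in> P \<Longrightarrow> 0 \<le> sint dm \<alpha> + sint q \<beta>" "sint v \<alpha> + sint w \<beta> < 0"
proof -
  define S where "S = {((\<lambda>A. c * v A), (\<lambda>A. c * w A)) | c v w. c \<ge> 0 \<and> (v, w) \<in> P}"
  have hatP: "hatP P = wstar_closure S"
    by (simp only: hatP_def S_def)
  have "P \<subseteq> Vsp" and convex: "convex_pairs (hatP P)"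
    using P(1) by (simp_all add: thermo_theory_def)
  have S_signed: "signed_measure (fst y) \<and> signed_measure (snd y)" if "y \<in> S" for y
    using that \<open>P \<subseteq> Vsp\<close>
    by (auto simp: S_def signed_measure_lincomb[where b=0, simplified] dest!: Vsp_signed_measure)
  have S_scale: "((\<lambda>A. c * fst y A), (\<lambda>A. c * snd y A)) \<in> S" if "y \<in> S" "0 \<le> c" for y c
    using that unfolding S_def by (force simp: mult.assoc[symmetric])
  obtain F \<epsilon> where F: "finite F" "\<And>f. f \<in> F \<Longrightarrow> continuous_on UNIV f" and "0 < \<epsilon>"
    and sep: "\<And>y. y \<in> S \<Longrightarrow>
      \<exists>f\<in>F. \<epsilon> \<le> \<bar>sint (fst y) f - sint (fst (v, w)) f\<bar> \<or> \<epsilon> \<le> \<bar>sint (snd y) f - sint (snd (v, w)) f\<bar>"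
    using not_in_wstar_closure[OF vw(1) vw(2)[unfolded hatP]] by blast
  have far: "(\<epsilon> / 2)\<^sup>2 \<le> (\<Sum>i\<in>F \<times> UNIV. (test_vector F (v, w) i - c * test_vector F x i)\<^sup>2)"
    if "0 \<le> c" "x \<in> hatP P" for c x
  proof -
    have "\<exists>f\<in>F. \<epsilon> / 2 \<le> \<bar>c * sint (fst x) f - sint v f\<bar> \<or> \<epsilon> / 2 \<le> \<bar>c * sint (snd x) f - sint w f\<bar>"
      using S_signed S_scale hatP that
      by (intro wstar_closure_scaled_far[OF compact _ _ F \<open>0 < \<epsilon>\<close> sep[simplified]]) auto
    then obtain f where "f \<in> F"
      and "\<epsilon> / 2 \<le> \<bar>c * sint (fst x) f - sint v f\<bar> \<or> \<epsilon> / 2 \<le> \<bar>c * sint (snd x) f - sint w f\<bar>"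
      by blast
    then show ?thesis
      using sum_sq_test_vector_ge[OF F(1) \<open>f \<in> F\<close>, where \<epsilon>="\<epsilon> / 2"] \<open>0 < \<epsilon>\<close> by simp
  qed
  have "0 < (\<epsilon> / 2)\<^sup>2"
    using \<open>0 < \<epsilon>\<close> by simp
  then obtain \<alpha> \<beta> where "continuous_on UNIV \<alpha>" "continuous_on UNIV \<beta>"
    and pos: "\<And>x. x \<in> hatP P \<Longrightarrow> 0 \<le> sint (fst x) \<alpha> + sint (snd x) \<beta>" and "sint v \<alpha> + sint w \<beta> < 0"
    using test_vector_separation[OF compact F convex hatP_subset_Vsp P(2) vw(1) _ far] by blast
  moreover have "0 \<le> sint dm \<alpha> + sint q \<beta>" if "(dm, q) \<in> P" for dm q
    using pos[of "(dm, q)"] subset_hatP[OF \<open>P \<subseteq> Vsp\<close>] that by auto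
  ultimately show ?thesis
    using that by blast
qed

section \<open>Clausius-Duhem pairs\<close>

lemma small_multiple_below_positive:
  fixes g h :: "'a::topological_space \<Rightarrow> real"
  assumes compact: "compact (UNIV :: 'a set)" and g: "continuous_on UNIV g" "\<And>x. 0 < g x"
    and h: "continuous_on UNIV h"
  obtains \<kappa> where "0 < \<kappa>" "\<And>x. \<kappa> * h x < g x"
proof -
  obtain x0 where x0: "\<And>x. g x0 \<le> g x"
    using continuous_attains_inf[OF compact UNIV_not_empty g(1)] by blast
  obtain B where B: "\<And>x. \<bar>h x\<bar> \<le> B"
    using continuous_on_compact_UNIV_bounded_borel(2)[OF compact h] by (auto simp: bounded_real)
  define \<kappa> where "\<kappa> = g x0 / (B + 1)"
  have "0 \<le> B"
    using B[of x0] by linarith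
  then have "0 < \<kappa>"
    using g(2)[of x0] by (simp add: \<kappa>_def)
  moreover have "\<kappa> * h x < g x" for x
  proof -
    have "\<kappa> * h x \<le> \<kappa> * B"
      using B[of x] \<open>0 < \<kappa>\<close> by (intro mult_left_mono) (auto simp: abs_le_iff)
    also have "\<dots> < g x0"
      using g(2)[of x0] \<open>0 \<le> B\<close> by (simp add: \<kappa>_def field_simps)
    finally show ?thesis
      using x0[of x] by linarith
  qed
  ultimately show ?thesis
    using that by blast
qed

lemma CD_pair_perturbation:
  fixes P :: "('a::topological_space smeasure \<times> 'a smeasure) set"
  assumes compact: "compact (UNIV :: 'a set)" and "P \<subseteq> Vsp" and CD: "CD_pair P \<eta>0 T0"
    and \<alpha>: "continuous_on UNIV \<alpha>" and \<beta>: "continuous_on UNIV \<beta>"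
    and pos: "\<And>dm q. (dm, q) \<in> P \<Longrightarrow> 0 \<le> sint dm \<alpha> + sint q \<beta>"
  obtains \<eta> T \<kappa> where "CD_pair P \<eta> T" "0 < \<kappa>"
    "\<And>\<mu> \<nu>. signed_measure \<mu> \<Longrightarrow> signed_measure \<nu> \<Longrightarrow>
       sint \<mu> \<eta> - sint \<nu> (\<lambda>x. 1 / T x) = sint \<mu> \<eta>0 - sint \<nu> (\<lambda>x. 1 / T0 x) + \<kappa> * (sint \<mu> \<alpha> + sint \<nu> \<beta>)"
proof -
  have \<eta>0: "continuous_on UNIV \<eta>0" and T0: "continuous_on UNIV T0" "\<And>x. 0 < T0 x"
    and CD0: "\<And>dm q. (dm, q) \<in> P \<Longrightarrow> sint q (\<lambda>x. 1 / T0 x) \<le> sint dm \<eta>0"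
    using CD by (auto simp: CD_pair_def)
  have inv_T0: "continuous_on UNIV (\<lambda>x. 1 / T0 x)"
    by (intro continuous_on_divide continuous_on_const T0(1)) (metis T0(2) less_irrefl)
  obtain \<kappa> where "0 < \<kappa>" and small: "\<And>x. \<kappa> * \<beta> x < 1 / T0 x"
    using small_multiple_below_positive[OF compact inv_T0 _ \<beta>] T0(2) by auto
  define \<eta> where "\<eta> = (\<lambda>x. 1 * \<eta>0 x + \<kappa> * \<alpha> x)"
  define g where "g = (\<lambda>x. 1 * (1 / T0 x) + (- \<kappa>) * \<beta> x)"
  have g: "continuous_on UNIV g" "\<And>x. 0 < g x"
    unfolding g_def by (intro continuous_on_add continuous_on_mult continuous_on_const inv_T0 \<beta>) (use small in simp_all)
  note bb = continuous_on_compact_UNIV_bounded_borel[OF compact]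
  have sint_eq: "sint \<mu> \<eta> - sint \<nu> (\<lambda>x. 1 / (1 / g x)) = sint \<mu> \<eta>0 - sint \<nu> (\<lambda>x. 1 / T0 x) + \<kappa> * (sint \<mu> \<alpha> + sint \<nu> \<beta>)"
    if "signed_measure \<mu>" "signed_measure \<nu>" for \<mu> \<nu>
    using sint_lincomb_fun[OF that(1) bb[OF \<eta>0] bb[OF \<alpha>], of 1 \<kappa>]
      sint_lincomb_fun[OF that(2) bb[OF inv_T0] bb[OF \<beta>], of 1 "- \<kappa>"]
    by (simp add: \<eta>_def g_def algebra_simps)
  have "CD_pair P \<eta> (\<lambda>x. 1 / g x)"
    unfolding CD_pair_def
  proof (intro conjI allI ballI)
    show "continuous_on UNIV \<eta>"
      unfolding \<eta>_def using \<eta>0 \<alpha> by (intro continuous_intros)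
    show "continuous_on UNIV (\<lambda>x. 1 / g x)"
      by (intro continuous_on_divide continuous_on_const g(1)) (metis g(2) less_irrefl)
    show "0 < 1 / g x" for x
      using g(2)[of x] by simp
    fix z assume "z \<in> P"
    then obtain dm q where z: "z = (dm, q)" "(dm, q) \<in> P"
      by (cases z) auto
    then have "signed_measure dm" "signed_measure q"
      using \<open>P \<subseteq> Vsp\<close> Vsp_signed_measure by fastforce+
    moreover have "0 \<le> \<kappa> * (sint dm \<alpha> + sint q \<beta>)"
      using \<open>0 < \<kappa>\<close> pos[OF z(2)] by simp
    ultimately show "case z of (dm, q) \<Rightarrow> sint q (\<lambda>x. 1 / (1 / g x)) \<le> sint dm \<eta>"
      unfolding z(1) prod.case using sint_eq CD0[OF z(2)] by fastforce
  qed
  then show ?thesis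
    using that \<open>0 < \<kappa>\<close> sint_eq by blast
qed

theorem lemma3p2:
  fixes P :: "(('a::t2_space) smeasure \<times> 'a smeasure) set"
    and \<eta>0 T0 :: "'a \<Rightarrow> real"
    and v w :: "'a smeasure"
  assumes "compact (UNIV :: 'a set)"
    and "kelvin_planck P"
    and "CD_pair P \<eta>0 T0"
    and "(v, w) \<in> Vsp"
    and "sint v \<eta>0 - sint w (\<lambda>x. 1 / T0 x) = 0"
    and "(v, w) \<notin> hatP P"
  shows "\<exists>\<eta> T. CD_pair P \<eta> T \<and> sint v \<eta> - sint w (\<lambda>x. 1 / T x) < 0"
proof -
  have P: "thermo_theory P" "hatP P \<noteq> {}" and "P \<subseteq> Vsp"
    using assms(2) by (auto simp: kelvin_planck_def thermo_theory_def)
  obtain \<alpha> \<beta> where \<alpha>\<beta>: "continuous_on UNIV \<alpha>" "continuous_on UNIV \<beta>"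
    and pos: "\<And>dm q. (dm, q) \<in> P \<Longrightarrow> 0 \<le> sint dm \<alpha> + sint q \<beta>" and neg: "sint v \<alpha> + sint w \<beta> < 0"
    using hatP_separation[OF assms(1) P assms(4,6)] by blast
  obtain \<eta> T \<kappa> where "CD_pair P \<eta> T" "0 < \<kappa>"
    and shift: "\<And>\<mu> \<nu>. signed_measure \<mu> \<Longrightarrow> signed_measure \<nu> \<Longrightarrow>
       sint \<mu> \<eta> - sint \<nu> (\<lambda>x. 1 / T x) = sint \<mu> \<eta>0 - sint \<nu> (\<lambda>x. 1 / T0 x) + \<kappa> * (sint \<mu> \<alpha> + sint \<nu> \<beta>)"
    using CD_pair_perturbation[OF assms(1) \<open>P \<subseteq> Vsp\<close> assms(3) \<alpha>\<beta> pos] by blast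
  have "sint v \<eta> - sint w (\<lambda>x. 1 / T x) = \<kappa> * (sint v \<alpha> + sint w \<beta>)"
    using shift Vsp_signed_measure[OF assms(4)] assms(5) by simp
  also have "\<dots> < 0"
    using \<open>0 < \<kappa>\<close> neg by (rule mult_pos_neg)
  finally show ?thesis
    using \<open>CD_pair P \<eta> T\<close> by blast
qed

end
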